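(* $\mathsf{G3iLL}$ has sequent interpolation: for all finite multisets of formulas $\Gamma,\Gamma'$ and every multiset $\Delta$ of at most one formula, if $\Gamma,\Gamma'\Rightarrow\Delta$ is derivable in $\mathsf{G3iLL}$, then there is a formula $\chi$ such that $\Gamma\Rightarrow\chi$ and $\Gamma',\chi\Rightarrow\Delta$ are derivable in $\mathsf{G3iLL}$ and every atom occurring in $\chi$ occurs both in $\Gamma$ and in $\Gamma'\cup\Delta$.
   Context: Formulas are built from the constant $\bot$ and propositional atoms (with $\bot$ not an atom) using $\wedge,\vee,\to$ and a unary modal operator $\bigcirc$. A sequent is $\Gamma\Rightarrow\Delta$ with $\Gamma,\Delta$ finite multisets of formulas, $\Delta$ containing at most one formula. The calculus $\mathsf{G3iLL}$ has axioms $\Gamma,p\Rightarrow p$ ($p$ an atom) and $\Gamma,\bot\Rightarrow\Delta$, and rules (premisses / conclusion): $R\wedge$: $\Gamma\Rightarrow\phi$, $\Gamma\Rightarrow\psi$ / $\Gamma\Rightarrow\phi\wedge\psi$; $L\wedge$: $\Gamma,\phi,\psi\Rightarrow\Delta$ / $\Gamma,\phi\wedge\psi\Rightarrow\Delta$; $R\vee$: $\Gamma\Rightarrow\phi_i$ / $\Gamma\Rightarrow\phi_0\vee\phi_1$ ($i=0,1$); $L\vee$: $\Gamma,\phi\Rightarrow\Delta$, $\Gamma,\psi\Rightarrow\Delta$ / $\Gamma,\phi\vee\psi\Rightarrow\Delta$; $R\to$: $\Gamma,\phi\Rightarrow\psi$ / $\Gamma\Rightarrow\phi\to\psi$; $L\to$: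 $\Gamma,\phi\to\psi\Rightarrow\phi$, $\Gamma,\psi\Rightarrow\Delta$ / $\Gamma,\phi\to\psi\Rightarrow\Delta$; $R\bigcirc$: $\Gamma\Rightarrow\phi$ / $\Gamma\Rightarrow\bigcirc\phi$; $L\bigcirc$: $\Gamma,\psi\Rightarrow\bigcirc\phi$ / $\Gamma,\bigcirc\psi\Rightarrow\bigcirc\phi$. *)

theory Defs
  imports Main "HOL-Library.Multiset"
begin

datatype 'a fm =
    Bot
  | At 'a
  | Conj "'a fm" "'a fm"
  | Disj "'a fm" "'a fm"
  | Imp "'a fm" "'a fm"
  | Circ "'a fm"

primrec atoms :: "'a fm \<Rightarrow> 'a set" where
  "atoms Bot = {}"
| "atoms (At p) = {p}"
| "atoms (Conj A B) = atoms A \<union> atoms B"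
| "atoms (Disj A B) = atoms A \<union> atoms B"
| "atoms (Imp A B) = atoms A \<union> atoms B"
| "atoms (Circ A) = atoms A"

definition atoms_ms :: "'a fm multiset \<Rightarrow> 'a set" where
  "atoms_ms M = (\<Union>A\<in>set_mset M. atoms A)"

inductive G3iLL :: "'a fm multiset \<Rightarrow> 'a fm multiset \<Rightarrow> bool" where
  ax: "G3iLL (add_mset (At p) \<Gamma>) {#At p#}"
| botL: "size \<Delta> \<le> 1 \<Longrightarrow> G3iLL (add_mset Bot \<Gamma>) \<Delta>"
| conjR: "G3iLL \<Gamma> {#A#} \<Longrightarrow> G3iLL \<Gamma> {#B#} \<Longrightarrow> G3iLL \<Gamma> {#Conj A B#}"
| conjL: "G3iLL (add_mset A (add_mset B \<Gamma>)) \<Delta> \<Longrightarrow> G3iLL (add_mset (Conj A B) \<Gamma>) \<Delta>"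
| disjR1: "G3iLL \<Gamma> {#A#} \<Longrightarrow> G3iLL \<Gamma> {#Disj A B#}"
| disjR2: "G3iLL \<Gamma> {#B#} \<Longrightarrow> G3iLL \<Gamma> {#Disj A B#}"
| disjL: "G3iLL (add_mset A \<Gamma>) \<Delta> \<Longrightarrow> G3iLL (add_mset B \<Gamma>) \<Delta> \<Longrightarrow>
           G3iLL (add_mset (Disj A B) \<Gamma>) \<Delta>"
| impR: "G3iLL (add_mset A \<Gamma>) {#B#} \<Longrightarrow> G3iLL \<Gamma> {#Imp A B#}"
| impL: "G3iLL (add_mset (Imp A B) \<Gamma>) {#A#} \<Longrightarrow> G3iLL (add_mset B \<Gamma>) \<Delta> \<Longrightarrow>
           G3iLL (add_mset (Imp A B) \<Gamma>) \<Delta>"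
| circR: "G3iLL \<Gamma> {#A#} \<Longrightarrow> G3iLL \<Gamma> {#Circ A#}"
| circL: "G3iLL (add_mset B \<Gamma>) {#Circ A#} \<Longrightarrow> G3iLL (add_mset (Circ B) \<Gamma>) {#Circ A#}"

end

theory Submission
  imports Defs
begin

(* Maehara's method: by induction on the derivation, every split \<Gamma> + \<Gamma>' of the antecedent
  of a derivable sequent has an interpolant. For a right rule, the interpolants of the premises
  for the same split are reused (conjoined for conjR; for impR the new hypothesis joins \<Gamma>').
  For a left rule, the principal formula lies in \<Gamma> or in \<Gamma>'. In \<Gamma> the rule is mirrored
  on the interpolants (Disj for disjL, Circ for circL, Imp c1 c2 for impL, where c1 interpolates
  the left premise with the roles of the two parts swapped); in \<Gamma>' they are conjoined. *)

lemma G3iLL_weaken: "G3iLL \<Gamma> \<Delta> \<Longrightarrow> G3iLL (add_mset C \<Gamma>) \<Delta>"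
  by (induction rule: G3iLL.induct) (simp_all add: add_mset_commute[of C] G3iLL.intros)

lemma add_mset_eq_union_cases:
  assumes "add_mset X R = \<Gamma> + \<Gamma>'"
  obtains G where "\<Gamma> = add_mset X G" "R = G + \<Gamma>'"
        | G where "\<Gamma>' = add_mset X G" "R = \<Gamma> + G"
proof (cases "X \<in># \<Gamma>")
  case True
  then show ?thesis using assms that(1)[of "\<Gamma> - {#X#}"]
    by (metis add_mset_remove_trivial insert_DiffM union_mset_add_mset_left)
next
  case False
  then have "X \<in># \<Gamma>'" by (metis assms union_iff union_single_eq_member)
  then show ?thesis using assms that(2)[of "\<Gamma>' - {#X#}"]
    by (metis add_mset_remove_trivial insert_DiffM union_mset_add_mset_right)
qed

lemma atoms_ms_add_mset [simp]: "atoms_ms (add_mset A M) = atoms A \<union> atoms_ms M"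
  by (simp add: atoms_ms_def)

lemma atoms_ms_union [simp]: "atoms_ms (M + N) = atoms_ms M \<union> atoms_ms N"
  by (simp add: atoms_ms_def)

lemma atoms_ms_empty [simp]: "atoms_ms {#} = {}"
  by (simp add: atoms_ms_def)

abbreviation Top :: "'a fm" where
  "Top \<equiv> Imp Bot Bot"

lemma G3iLL_Top: "G3iLL \<Gamma> {#Top#}"
  by (intro G3iLL.impR G3iLL.botL) simp

definition interpolant ::
    "'a fm multiset \<Rightarrow> 'a fm multiset \<Rightarrow> 'a fm multiset \<Rightarrow> 'a fm \<Rightarrow> bool" where
  "interpolant \<Gamma> \<Gamma>' \<Delta> \<chi> \<longleftrightarrow>
     G3iLL \<Gamma> {#\<chi>#} \<and> G3iLL (add_mset \<chi> \<Gamma>') \<Delta> \<and>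
     atoms \<chi> \<subseteq> atoms_ms \<Gamma> \<inter> atoms_ms (\<Gamma>' + \<Delta>)"

definition has_interpolants :: "'a fm multiset \<Rightarrow> 'a fm multiset \<Rightarrow> bool" where
  "has_interpolants \<Sigma> \<Delta> \<longleftrightarrow> (\<forall>\<Gamma> \<Gamma>'. \<Sigma> = \<Gamma> + \<Gamma>' \<longrightarrow> (\<exists>\<chi>. interpolant \<Gamma> \<Gamma>' \<Delta> \<chi>))"

lemma has_interpolantsD:
  "has_interpolants (\<Gamma> + \<Gamma>') \<Delta> \<Longrightarrow> \<exists>\<chi>. interpolant \<Gamma> \<Gamma>' \<Delta> \<chi>"
  by (simp add: has_interpolants_def)

lemma has_interpolants_add_msetI:
  assumes "\<And>G \<Gamma>'. \<Sigma> = G + \<Gamma>' \<Longrightarrow> \<exists>\<chi>. interpolant (add_mset X G) \<Gamma>' \<Delta> \<chi>"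
    and "\<And>\<Gamma> G. \<Sigma> = \<Gamma> + G \<Longrightarrow> \<exists>\<chi>. interpolant \<Gamma> (add_mset X G) \<Delta> \<chi>"
  shows "has_interpolants (add_mset X \<Sigma>) \<Delta>"
  unfolding has_interpolants_def
proof (intro allI impI)
  fix \<Gamma> \<Gamma>' assume "add_mset X \<Sigma> = \<Gamma> + \<Gamma>'"
  then show "\<exists>\<chi>. interpolant \<Gamma> \<Gamma>' \<Delta> \<chi>"
  proof (cases rule: add_mset_eq_union_cases)
    case (1 G)
    then show ?thesis using assms(1) by simp
  next
    case (2 G)
    then show ?thesis using assms(2) by simp
  qed
qed

lemma has_interpolants_ax: "has_interpolants (add_mset (At p) \<Sigma>) {#At p#}"
proof (rule has_interpolants_add_msetI)
  fix G \<Gamma>'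
  show "\<exists>\<chi>. interpolant (add_mset (At p) G) \<Gamma>' {#At p#} \<chi>"
    by (rule exI[of _ "At p"]) (simp add: interpolant_def G3iLL.ax)
next
  fix \<Gamma> G
  have "G3iLL (add_mset Top (add_mset (At p) G)) {#At p#}"
    using G3iLL.ax[of p "add_mset Top G"] by (simp add: add_mset_commute)
  then show "\<exists>\<chi>. interpolant \<Gamma> (add_mset (At p) G) {#At p#} \<chi>"
    by (intro exI[of _ Top]) (simp add: interpolant_def G3iLL_Top)
qed

lemma has_interpolants_botL:
  assumes "size \<Delta> \<le> 1"
  shows "has_interpolants (add_mset Bot \<Sigma>) \<Delta>"
proof (rule has_interpolants_add_msetI)
  fix G \<Gamma>'
  show "\<exists>\<chi>. interpolant (add_mset Bot G) \<Gamma>' \<Delta> \<chi>"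
    using assms by (intro exI[of _ Bot]) (simp add: interpolant_def G3iLL.botL)
next
  fix \<Gamma> G
  have "G3iLL (add_mset Top (add_mset Bot G)) \<Delta>"
    using G3iLL.botL[OF assms, of "add_mset Top G"] by (simp add: add_mset_commute)
  then show "\<exists>\<chi>. interpolant \<Gamma> (add_mset Bot G) \<Delta> \<chi>"
    by (intro exI[of _ Top]) (simp add: interpolant_def G3iLL_Top)
qed

lemma has_interpolants_conjR:
  assumes "has_interpolants \<Sigma> {#A#}" and "has_interpolants \<Sigma> {#B#}"
  shows "has_interpolants \<Sigma> {#Conj A B#}"
  unfolding has_interpolants_def
proof (intro allI impI)
  fix \<Gamma> \<Gamma>' assume "\<Sigma> = \<Gamma> + \<Gamma>'"
  then obtain c1 c2 where c1: "interpolant \<Gamma> \<Gamma>' {#A#} c1"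
    and c2: "interpolant \<Gamma> \<Gamma>' {#B#} c2"
    using assms has_interpolantsD by blast
  have "G3iLL (add_mset c1 (add_mset c2 \<Gamma>')) {#A#}"
    using c1 G3iLL_weaken[of "add_mset c1 \<Gamma>'" "{#A#}" c2]
    by (simp add: interpolant_def add_mset_commute[of c2])
  moreover have "G3iLL (add_mset c1 (add_mset c2 \<Gamma>')) {#B#}"
    using c2 G3iLL_weaken[of "add_mset c2 \<Gamma>'" "{#B#}" c1] by (simp add: interpolant_def)
  ultimately have "G3iLL (add_mset (Conj c1 c2) \<Gamma>') {#Conj A B#}"
    by (intro G3iLL.conjL G3iLL.conjR)
  with c1 c2 have "interpolant \<Gamma> \<Gamma>' {#Conj A B#} (Conj c1 c2)"
    by (auto simp: interpolant_def intro: G3iLL.conjR)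
  then show "\<exists>\<chi>. interpolant \<Gamma> \<Gamma>' {#Conj A B#} \<chi>" ..
qed

lemma has_interpolants_succedent_mono:
  assumes "has_interpolants \<Sigma> \<Delta>"
    and "\<And>\<Gamma>. G3iLL \<Gamma> \<Delta> \<Longrightarrow> G3iLL \<Gamma> \<Delta>'" and "atoms_ms \<Delta> \<subseteq> atoms_ms \<Delta>'"
  shows "has_interpolants \<Sigma> \<Delta>'"
  unfolding has_interpolants_def
proof (intro allI impI)
  fix \<Gamma> \<Gamma>' assume "\<Sigma> = \<Gamma> + \<Gamma>'"
  then obtain c where "interpolant \<Gamma> \<Gamma>' \<Delta> c"
    using assms(1) has_interpolantsD by blast
  then have "interpolant \<Gamma> \<Gamma>' \<Delta>' c"
    using assms(2,3) unfolding interpolant_def by auto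
  then show "\<exists>\<chi>. interpolant \<Gamma> \<Gamma>' \<Delta>' \<chi>" ..
qed

lemma has_interpolants_disjR1:
  "has_interpolants \<Sigma> {#A#} \<Longrightarrow> has_interpolants \<Sigma> {#Disj A B#}"
  by (erule has_interpolants_succedent_mono) (auto intro: G3iLL.disjR1)

lemma has_interpolants_disjR2:
  "has_interpolants \<Sigma> {#B#} \<Longrightarrow> has_interpolants \<Sigma> {#Disj A B#}"
  by (erule has_interpolants_succedent_mono) (auto intro: G3iLL.disjR2)

lemma has_interpolants_circR:
  "has_interpolants \<Sigma> {#A#} \<Longrightarrow> has_interpolants \<Sigma> {#Circ A#}"
  by (erule has_interpolants_succedent_mono) (auto intro: G3iLL.circR)


lemma has_interpolants_impR:
  assumes "has_interpolants (add_mset A \<Sigma>) {#B#}"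
  shows "has_interpolants \<Sigma> {#Imp A B#}"
  unfolding has_interpolants_def
proof (intro allI impI)
  fix \<Gamma> \<Gamma>' assume "\<Sigma> = \<Gamma> + \<Gamma>'"
  then obtain c where c: "interpolant \<Gamma> (add_mset A \<Gamma>') {#B#} c"
    using assms has_interpolantsD[of \<Gamma> "add_mset A \<Gamma>'" "{#B#}"] by auto
  then have "G3iLL (add_mset c \<Gamma>') {#Imp A B#}"
    by (intro G3iLL.impR) (simp add: interpolant_def add_mset_commute)
  with c have "interpolant \<Gamma> \<Gamma>' {#Imp A B#} c"
    by (auto simp: interpolant_def)
  then show "\<exists>\<chi>. interpolant \<Gamma> \<Gamma>' {#Imp A B#} \<chi>" ..
qed

lemma has_interpolants_conjL:
  assumes "has_interpolants (add_mset A (add_mset B \<Sigma>)) \<Delta>"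
  shows "has_interpolants (add_mset (Conj A B) \<Sigma>) \<Delta>"
proof (rule has_interpolants_add_msetI)
  fix G \<Gamma>' assume "\<Sigma> = G + \<Gamma>'"
  then obtain c where "interpolant (add_mset A (add_mset B G)) \<Gamma>' \<Delta> c"
    using assms has_interpolantsD[of "add_mset A (add_mset B G)" \<Gamma>' \<Delta>] by auto
  then have "interpolant (add_mset (Conj A B) G) \<Gamma>' \<Delta> c"
    by (auto simp: interpolant_def intro: G3iLL.conjL)
  then show "\<exists>\<chi>. interpolant (add_mset (Conj A B) G) \<Gamma>' \<Delta> \<chi>" ..
next
  fix \<Gamma> G assume "\<Sigma> = \<Gamma> + G"
  then obtain c where c: "interpolant \<Gamma> (add_mset A (add_mset B G)) \<Delta> c"
    using assms has_interpolantsD[of \<Gamma> "add_mset A (add_mset B G)" \<Delta>] by auto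
  then have "G3iLL (add_mset (Conj A B) (add_mset c G)) \<Delta>"
    by (intro G3iLL.conjL) (simp add: interpolant_def add_mset_commute)
  with c have "interpolant \<Gamma> (add_mset (Conj A B) G) \<Delta> c"
    by (auto simp: interpolant_def add_mset_commute)
  then show "\<exists>\<chi>. interpolant \<Gamma> (add_mset (Conj A B) G) \<Delta> \<chi>" ..
qed

lemma has_interpolants_disjL:
  assumes "has_interpolants (add_mset A \<Sigma>) \<Delta>" and "has_interpolants (add_mset B \<Sigma>) \<Delta>"
  shows "has_interpolants (add_mset (Disj A B) \<Sigma>) \<Delta>"
proof (rule has_interpolants_add_msetI)
  fix G \<Gamma>' assume "\<Sigma> = G + \<Gamma>'"
  then obtain c1 c2 where c1: "interpolant (add_mset A G) \<Gamma>' \<Delta> c1"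
    and c2: "interpolant (add_mset B G) \<Gamma>' \<Delta> c2"
    using assms has_interpolantsD[of "add_mset A G" \<Gamma>' \<Delta>]
      has_interpolantsD[of "add_mset B G" \<Gamma>' \<Delta>]
    by auto
  then have "interpolant (add_mset (Disj A B) G) \<Gamma>' \<Delta> (Disj c1 c2)"
    by (auto simp: interpolant_def intro: G3iLL.disjL G3iLL.disjR1 G3iLL.disjR2)
  then show "\<exists>\<chi>. interpolant (add_mset (Disj A B) G) \<Gamma>' \<Delta> \<chi>" ..
next
  fix \<Gamma> G assume "\<Sigma> = \<Gamma> + G"
  then obtain c1 c2 where c1: "interpolant \<Gamma> (add_mset A G) \<Delta> c1"
    and c2: "interpolant \<Gamma> (add_mset B G) \<Delta> c2"
    using assms has_interpolantsD[of \<Gamma> "add_mset A G" \<Delta>]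
      has_interpolantsD[of \<Gamma> "add_mset B G" \<Delta>]
    by auto
  have "G3iLL (add_mset A (add_mset c1 (add_mset c2 G))) \<Delta>"
    using c1 G3iLL_weaken[of "add_mset c1 (add_mset A G)" \<Delta> c2]
    by (simp add: interpolant_def add_mset_commute)
  moreover have "G3iLL (add_mset B (add_mset c1 (add_mset c2 G))) \<Delta>"
    using c2 G3iLL_weaken[of "add_mset c2 (add_mset B G)" \<Delta> c1]
    by (simp add: interpolant_def add_mset_commute)
  ultimately have "G3iLL (add_mset (Disj A B) (add_mset c1 (add_mset c2 G))) \<Delta>"
    by (rule G3iLL.disjL)
  then have "G3iLL (add_mset (Conj c1 c2) (add_mset (Disj A B) G)) \<Delta>"
    by (intro G3iLL.conjL) (simp add: add_mset_commute)
  with c1 c2 have "interpolant \<Gamma> (add_mset (Disj A B) G) \<Delta> (Conj c1 c2)"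
    by (auto simp: interpolant_def intro: G3iLL.conjR)
  then show "\<exists>\<chi>. interpolant \<Gamma> (add_mset (Disj A B) G) \<Delta> \<chi>" ..
qed

lemma has_interpolants_impL:
  assumes "has_interpolants (add_mset (Imp A B) \<Sigma>) {#A#}"
    and "has_interpolants (add_mset B \<Sigma>) \<Delta>"
  shows "has_interpolants (add_mset (Imp A B) \<Sigma>) \<Delta>"
proof (rule has_interpolants_add_msetI)
  fix G \<Gamma>' assume split: "\<Sigma> = G + \<Gamma>'"
  then obtain c1 where c1: "interpolant \<Gamma>' (add_mset (Imp A B) G) {#A#} c1"
    using assms(1) has_interpolantsD[of \<Gamma>' "add_mset (Imp A B) G" "{#A#}"]
    by (auto simp: add.commute)
  obtain c2 where c2: "interpolant (add_mset B G) \<Gamma>' \<Delta> c2"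
    using split assms(2) has_interpolantsD[of "add_mset B G" \<Gamma>' \<Delta>] by auto
  have "G3iLL (add_mset (Imp A B) (add_mset c1 G)) {#A#}"
    using c1 by (simp add: interpolant_def add_mset_commute)
  moreover have "G3iLL (add_mset B (add_mset c1 G)) {#c2#}"
    using c2 G3iLL_weaken[of "add_mset B G" "{#c2#}" c1]
    by (simp add: interpolant_def add_mset_commute)
  ultimately have "G3iLL (add_mset (Imp A B) (add_mset c1 G)) {#c2#}"
    by (rule G3iLL.impL)
  then have "G3iLL (add_mset (Imp A B) G) {#Imp c1 c2#}"
    by (intro G3iLL.impR) (simp add: add_mset_commute)
  moreover have "G3iLL (add_mset (Imp c1 c2) \<Gamma>') \<Delta>"
    using c1 c2 by (auto simp: interpolant_def intro: G3iLL.impL G3iLL_weaken)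
  ultimately have "interpolant (add_mset (Imp A B) G) \<Gamma>' \<Delta> (Imp c1 c2)"
    using c1 c2 by (auto simp: interpolant_def)
  then show "\<exists>\<chi>. interpolant (add_mset (Imp A B) G) \<Gamma>' \<Delta> \<chi>" ..
next
  fix \<Gamma> G assume "\<Sigma> = \<Gamma> + G"
  then obtain c1 c2 where c1: "interpolant \<Gamma> (add_mset (Imp A B) G) {#A#} c1"
    and c2: "interpolant \<Gamma> (add_mset B G) \<Delta> c2"
    using assms has_interpolantsD[of \<Gamma> "add_mset (Imp A B) G" "{#A#}"]
      has_interpolantsD[of \<Gamma> "add_mset B G" \<Delta>]
    by auto
  have "G3iLL (add_mset (Imp A B) (add_mset c1 (add_mset c2 G))) {#A#}"
    using c1 G3iLL_weaken[of "add_mset c1 (add_mset (Imp A B) G)" "{#A#}" c2]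
    by (simp add: interpolant_def add_mset_commute)
  moreover have "G3iLL (add_mset B (add_mset c1 (add_mset c2 G))) \<Delta>"
    using c2 G3iLL_weaken[of "add_mset c2 (add_mset B G)" \<Delta> c1]
    by (simp add: interpolant_def add_mset_commute)
  ultimately have "G3iLL (add_mset (Imp A B) (add_mset c1 (add_mset c2 G))) \<Delta>"
    by (rule G3iLL.impL)
  then have "G3iLL (add_mset (Conj c1 c2) (add_mset (Imp A B) G)) \<Delta>"
    by (intro G3iLL.conjL) (simp add: add_mset_commute)
  with c1 c2 have "interpolant \<Gamma> (add_mset (Imp A B) G) \<Delta> (Conj c1 c2)"
    by (auto simp: interpolant_def intro: G3iLL.conjR)
  then show "\<exists>\<chi>. interpolant \<Gamma> (add_mset (Imp A B) G) \<Delta> \<chi>" ..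
qed

lemma has_interpolants_circL:
  assumes "has_interpolants (add_mset B \<Sigma>) {#Circ A#}"
  shows "has_interpolants (add_mset (Circ B) \<Sigma>) {#Circ A#}"
proof (rule has_interpolants_add_msetI)
  fix G \<Gamma>' assume "\<Sigma> = G + \<Gamma>'"
  then obtain c where "interpolant (add_mset B G) \<Gamma>' {#Circ A#} c"
    using assms has_interpolantsD[of "add_mset B G" \<Gamma>' "{#Circ A#}"] by auto
  then have "interpolant (add_mset (Circ B) G) \<Gamma>' {#Circ A#} (Circ c)"
    by (auto simp: interpolant_def intro: G3iLL.circL G3iLL.circR)
  then show "\<exists>\<chi>. interpolant (add_mset (Circ B) G) \<Gamma>' {#Circ A#} \<chi>" ..
next
  fix \<Gamma> G assume "\<Sigma> = \<Gamma> + G"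
  then obtain c where c: "interpolant \<Gamma> (add_mset B G) {#Circ A#} c"
    using assms has_interpolantsD[of \<Gamma> "add_mset B G" "{#Circ A#}"] by auto
  then have "G3iLL (add_mset (Circ B) (add_mset c G)) {#Circ A#}"
    by (intro G3iLL.circL) (simp add: interpolant_def add_mset_commute)
  with c have "interpolant \<Gamma> (add_mset (Circ B) G) {#Circ A#} c"
    by (auto simp: interpolant_def add_mset_commute)
  then show "\<exists>\<chi>. interpolant \<Gamma> (add_mset (Circ B) G) {#Circ A#} \<chi>" ..
qed

lemma G3iLL_has_interpolants: "G3iLL \<Sigma> \<Delta> \<Longrightarrow> has_interpolants \<Sigma> \<Delta>"
  by (induction rule: G3iLL.induct)
    (simp_all add: has_interpolants_ax has_interpolants_botL has_interpolants_conjR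
      has_interpolants_conjL has_interpolants_disjR1 has_interpolants_disjR2 has_interpolants_disjL
      has_interpolants_impR has_interpolants_impL has_interpolants_circR has_interpolants_circL)

theorem mainTheorem3:
  fixes \<Gamma> \<Gamma>' \<Delta> :: "'a fm multiset"
  assumes "size \<Delta> \<le> 1"
    and "G3iLL (\<Gamma> + \<Gamma>') \<Delta>"
  shows "\<exists>\<chi>. G3iLL \<Gamma> {#\<chi>#} \<and> G3iLL (add_mset \<chi> \<Gamma>') \<Delta> \<and>
              atoms \<chi> \<subseteq> atoms_ms \<Gamma> \<inter> atoms_ms (\<Gamma>' + \<Delta>)"
  using has_interpolantsD[OF G3iLL_has_interpolants[OF assms(2)]]
  unfolding interpolant_def .

end
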